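(* Let $\beta,\gamma,\delta\in\mathbb{R}$ be nonzero and let $A=\begin{pmatrix}0&\beta\\\gamma&\delta\end{pmatrix}$ or $A=\begin{pmatrix}\delta&\gamma\\\beta&0\end{pmatrix}$. Then $A$ is a Karamardian matrix if and only if $\gamma<0$, $\beta>0$ and $\delta>0$.
   Context: For $M\in\mathbb{R}^{n\times n}$ let $K_M=\mathbb{R}^n_+\cap R(M)$ and $K_M^*=\{y: x^Ty\ge 0\ \forall x\in K_M\}$ (one has $K_M^*=\mathbb{R}^n_++N(M^T)$, with interior $\{a+b: a>0,\ b\in N(M^T)\}$); for invertible $M$, $K_M=K_M^*=\mathbb{R}^n_+$. For $q$, LCP$(M,K_M,q)$ is to find $x\in K_M$ with $Mx+q\in K_M^*$ and $x^T(Mx+q)=0$. $M$ is a Karamardian matrix if $K_M\ne\{0\}$ and there exists $d$ in the interior of $K_M^*$ such that both LCP$(M,K_M,0)$ and LCP$(M,K_M,d)$ have $x=0$ as their only solution. *)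

theory Defs
  imports "HOL-Analysis.Analysis"
begin

definition nonneg_orthant :: "(real^'n::finite) set" where
  "nonneg_orthant = {x. \<forall>i. 0 \<le> x $ i}"

definition K_cone :: "real^'n^'n::finite \<Rightarrow> (real^'n) set" where
  "K_cone M = nonneg_orthant \<inter> range (\<lambda>x. M *v x)"

definition dual_cone :: "(real^'n::finite) set \<Rightarrow> (real^'n) set" where
  "dual_cone K = {y. \<forall>x\<in>K. 0 \<le> x \<bullet> y}"

definition LCP_sol :: "real^'n^'n::finite \<Rightarrow> (real^'n) set \<Rightarrow> real^'n \<Rightarrow> (real^'n) set" where
  "LCP_sol M K q = {x. x \<in> K \<and> M *v x + q \<in> dual_cone K \<and> x \<bullet> (M *v x + q) = 0}"

definition karamardian :: "real^'n^'n::finite \<Rightarrow> bool" where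
  "karamardian M \<longleftrightarrow> K_cone M \<noteq> {0} \<and>
     (\<exists>d \<in> interior (dual_cone (K_cone M)).
        LCP_sol M (K_cone M) 0 = {0} \<and> LCP_sol M (K_cone M) d = {0})"

end

theory Submission
  imports Defs
begin

text \<open>
  For invertible \<open>M\<close> the cone \<open>K_M\<close> is the whole nonnegative orthant, which is self-dual with
  the positive vectors as interior; so \<open>M\<close> is Karamardian iff the standard LCPs with \<open>q = 0\<close>
  and with some \<open>q > 0\<close> have only the trivial solution. The second matrix is the first one
  conjugated by the coordinate swap, which preserves all of this.

  For \<open>M = [[0,\<beta>],[\<gamma>,\<delta>]]\<close> each wrong sign yields an explicit nontrivial solution: \<open>e\<^sub>1\<close>
  for \<open>q = 0\<close> if \<open>\<gamma> > 0\<close>; \<open>(0, -q\<^sub>2/\<delta>)\<close> if \<open>\<delta> < 0 < \<beta>\<close>; and if \<open>\<beta> < 0\<close> the point with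
  \<open>Mx + q = 0\<close> and \<open>x\<^sub>2 = -q\<^sub>1/\<beta>\<close>, unless its first coordinate is negative, in which case
  \<open>(0, -q\<^sub>2/\<delta>)\<close> works again. Conversely, with the right signs both terms of
  \<open>x\<^sub>1 (Mx+q)\<^sub>1 + x\<^sub>2 (Mx+q)\<^sub>2 = 0\<close> are nonnegative, hence vanish, which forces \<open>x = 0\<close>.
\<close>

definition lcp_trivial :: "real^'n^'n::finite \<Rightarrow> real^'n \<Rightarrow> bool" where
  "lcp_trivial M q \<longleftrightarrow>
     (\<forall>x\<in>nonneg_orthant. M *v x + q \<in> nonneg_orthant \<and> x \<bullet> (M *v x + q) = 0 \<longrightarrow> x = 0)"

lemma K_cone_invertible:
  fixes M :: "real^'n^'n::finite"
  assumes "invertible M" shows "K_cone M = nonneg_orthant"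
proof -
  obtain N where "M ** N = mat 1" using assms unfolding invertible_def by blast
  then have "M *v (N *v y) = y" for y by (simp add: matrix_vector_mul_assoc)
  then have "range (\<lambda>x. M *v x) = UNIV" by (metis surj_def)
  then show ?thesis unfolding K_cone_def by simp
qed

lemma dual_cone_nonneg_orthant: "dual_cone nonneg_orthant = (nonneg_orthant :: (real^'n::finite) set)"
proof
  show "dual_cone nonneg_orthant \<subseteq> (nonneg_orthant :: (real^'n) set)"
  proof
    fix y :: "real^'n" assume y: "y \<in> dual_cone nonneg_orthant"
    have "0 \<le> y $ i" for i
    proof -
      have "axis i 1 \<in> (nonneg_orthant :: (real^'n) set)"
        by (simp add: nonneg_orthant_def axis_def)
      then have "0 \<le> axis i 1 \<bullet> y" using y unfolding dual_cone_def by blast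
      then show ?thesis by (simp add: inner_axis')
    qed
    then show "y \<in> nonneg_orthant" by (simp add: nonneg_orthant_def)
  qed
  show "nonneg_orthant \<subseteq> dual_cone (nonneg_orthant :: (real^'n) set)"
    unfolding dual_cone_def nonneg_orthant_def inner_vec_def
    by (auto intro!: sum_nonneg)
qed

lemma interior_nonneg_orthant:
  "interior nonneg_orthant = {x :: real^'n::finite. \<forall>i. 0 < x $ i}"
proof
  show "interior nonneg_orthant \<subseteq> {x :: real^'n. \<forall>i. 0 < x $ i}"
  proof (intro subsetI CollectI allI)
    fix d :: "real^'n" and i assume "d \<in> interior nonneg_orthant"
    then obtain e where e: "e > 0" "ball d e \<subseteq> nonneg_orthant"
      by (meson mem_interior)
    have "d - (e/2) *\<^sub>R axis i 1 \<in> ball d e" using e by (simp add: dist_norm)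
    then have "0 \<le> (d - (e/2) *\<^sub>R axis i 1) $ i" using e unfolding nonneg_orthant_def by blast
    then show "0 < d $ i" using e by simp
  qed
  have "{x :: real^'n. \<forall>i. 0 < x $ i} = (\<Inter>i. {x. x $ i > 0})" by auto
  then have "open {x :: real^'n. \<forall>i. 0 < x $ i}"
    by (simp add: open_INT open_halfspace_component_gt_cart)
  moreover have "{x :: real^'n. \<forall>i. 0 < x $ i} \<subseteq> nonneg_orthant"
    by (auto simp: nonneg_orthant_def less_imp_le)
  ultimately show "{x :: real^'n. \<forall>i. 0 < x $ i} \<subseteq> interior nonneg_orthant"
    by (simp add: interior_maximal)
qed

lemma LCP_sol_nonneg_orthant_eq_0_iff:
  assumes "q \<in> nonneg_orthant"
  shows "LCP_sol M nonneg_orthant q = {0} \<longleftrightarrow> lcp_trivial M q"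
  using assms unfolding LCP_sol_def lcp_trivial_def dual_cone_nonneg_orthant
  by (auto simp: nonneg_orthant_def)

lemma karamardian_invertible_iff:
  fixes M :: "real^'n^'n::finite"
  assumes "invertible M"
  shows "karamardian M \<longleftrightarrow> lcp_trivial M 0 \<and> (\<exists>d. (\<forall>i. 0 < d $ i) \<and> lcp_trivial M d)"
proof -
  have "(\<chi> i. 1) \<in> nonneg_orthant - {0 :: real^'n}"
    by (simp add: nonneg_orthant_def vec_eq_iff)
  then have "nonneg_orthant \<noteq> {0 :: real^'n}" by blast
  moreover have "LCP_sol M nonneg_orthant 0 = {0} \<longleftrightarrow> lcp_trivial M 0"
    by (rule LCP_sol_nonneg_orthant_eq_0_iff) (simp add: nonneg_orthant_def)
  moreover have "LCP_sol M nonneg_orthant d = {0} \<longleftrightarrow> lcp_trivial M d"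
    if "\<forall>i. 0 < d $ i" for d :: "real^'n"
    using that by (intro LCP_sol_nonneg_orthant_eq_0_iff) (simp add: nonneg_orthant_def less_imp_le)
  ultimately show ?thesis
    unfolding karamardian_def K_cone_invertible[OF assms] dual_cone_nonneg_orthant
      interior_nonneg_orthant
    by auto
qed

definition permute_vec :: "('n \<Rightarrow> 'n) \<Rightarrow> real^'n \<Rightarrow> real^'n" where
  "permute_vec \<sigma> x = (\<chi> i. x $ \<sigma> i)"

definition permute_mat :: "('n \<Rightarrow> 'n) \<Rightarrow> real^'n^'n \<Rightarrow> real^'n^'n" where
  "permute_mat \<sigma> M = (\<chi> i j. M $ \<sigma> i $ \<sigma> j)"

lemma permute_vec_add: "permute_vec \<sigma> (x + y) = permute_vec \<sigma> x + permute_vec \<sigma> y"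
  by (simp add: permute_vec_def vec_eq_iff)

lemma permute_vec_0 [simp]: "permute_vec \<sigma> 0 = 0"
  by (simp add: permute_vec_def vec_eq_iff)

lemma permute_vec_eq_0_iff: "surj \<sigma> \<Longrightarrow> permute_vec \<sigma> x = 0 \<longleftrightarrow> x = 0"
  by (auto simp: permute_vec_def vec_eq_iff) (metis surjD)

lemma permute_vec_nonneg_orthant_iff:
  "surj \<sigma> \<Longrightarrow> permute_vec \<sigma> x \<in> nonneg_orthant \<longleftrightarrow> x \<in> nonneg_orthant"
  by (auto simp: permute_vec_def nonneg_orthant_def) (metis surjD)

lemma permute_vec_pos_iff:
  "surj \<sigma> \<Longrightarrow> (\<forall>i. 0 < permute_vec \<sigma> x $ i) \<longleftrightarrow> (\<forall>i. 0 < x $ i)"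
  by (auto simp: permute_vec_def) (metis surjD)

lemma inner_permute_vec:
  fixes x y :: "real^'n::finite"
  assumes "bij \<sigma>" shows "permute_vec \<sigma> x \<bullet> permute_vec \<sigma> y = x \<bullet> y"
  unfolding inner_vec_def permute_vec_def
  using sum.reindex_bij_betw[of \<sigma> UNIV UNIV "\<lambda>i. x $ i \<bullet> y $ i"] assms
  by (simp add: bij_betw_def bij_def)

lemma permute_mat_mult_permute_vec:
  fixes M :: "real^'n^'n::finite"
  assumes "bij \<sigma>" shows "permute_mat \<sigma> M *v permute_vec \<sigma> x = permute_vec \<sigma> (M *v x)"
  unfolding matrix_vector_mult_def permute_mat_def permute_vec_def
  using sum.reindex_bij_betw[of \<sigma> UNIV UNIV "\<lambda>j. M $ _ $ j * x $ j"] assms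
  by (simp add: vec_eq_iff bij_betw_def bij_def)

lemma permute_vec_inv: "bij \<sigma> \<Longrightarrow> permute_vec \<sigma> (permute_vec (inv \<sigma>) x) = x"
  by (simp add: permute_vec_def vec_eq_iff bij_is_inj)

lemma all_permute_vec_iff: "bij \<sigma> \<Longrightarrow> (\<forall>x. P x) \<longleftrightarrow> (\<forall>x. P (permute_vec \<sigma> x))"
  by (metis permute_vec_inv)

lemma ex_permute_vec_iff: "bij \<sigma> \<Longrightarrow> (\<exists>x. P x) \<longleftrightarrow> (\<exists>x. P (permute_vec \<sigma> x))"
  using all_permute_vec_iff[of \<sigma> "\<lambda>x. \<not> P x"] by blast

lemma lcp_trivial_permute:
  fixes M :: "real^'n^'n::finite"
  assumes "bij \<sigma>"
  shows "lcp_trivial (permute_mat \<sigma> M) (permute_vec \<sigma> q) \<longleftrightarrow> lcp_trivial M q"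
proof -
  let ?solves = "\<lambda>M q x. x \<in> nonneg_orthant \<longrightarrow>
    M *v x + q \<in> nonneg_orthant \<and> x \<bullet> (M *v x + q) = 0 \<longrightarrow> x = 0"
  have "lcp_trivial (permute_mat \<sigma> M) (permute_vec \<sigma> q) \<longleftrightarrow>
        (\<forall>x. ?solves (permute_mat \<sigma> M) (permute_vec \<sigma> q) x)"
    unfolding lcp_trivial_def by blast
  also have "\<dots> \<longleftrightarrow> (\<forall>x. ?solves (permute_mat \<sigma> M) (permute_vec \<sigma> q) (permute_vec \<sigma> x))"
    by (rule all_permute_vec_iff[OF assms])
  also have "\<dots> \<longleftrightarrow> (\<forall>x. ?solves M q x)"
    using assms bij_is_surj[OF assms]
    by (simp add: permute_mat_mult_permute_vec inner_permute_vec permute_vec_nonneg_orthant_iff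
        permute_vec_eq_0_iff flip: permute_vec_add)
  also have "\<dots> \<longleftrightarrow> lcp_trivial M q"
    unfolding lcp_trivial_def by blast
  finally show ?thesis .
qed

lemma karamardian_permute:
  fixes M :: "real^'n^'n::finite"
  assumes "bij \<sigma>" and "invertible M" and "invertible (permute_mat \<sigma> M)"
  shows "karamardian (permute_mat \<sigma> M) \<longleftrightarrow> karamardian M"
proof -
  have "(\<exists>d. (\<forall>i. 0 < d $ i) \<and> lcp_trivial (permute_mat \<sigma> M) d) \<longleftrightarrow>
        (\<exists>d. (\<forall>i. 0 < permute_vec \<sigma> d $ i) \<and> lcp_trivial (permute_mat \<sigma> M) (permute_vec \<sigma> d))"
    by (rule ex_permute_vec_iff[OF assms(1)])
  also have "\<dots> \<longleftrightarrow> (\<exists>d. (\<forall>i. 0 < d $ i) \<and> lcp_trivial M d)"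
    using bij_is_surj[OF assms(1)]
    by (simp add: lcp_trivial_permute[OF assms(1)] permute_vec_pos_iff)
  moreover have "lcp_trivial (permute_mat \<sigma> M) 0 \<longleftrightarrow> lcp_trivial M 0"
    using lcp_trivial_permute[OF assms(1), of M 0] by simp
  ultimately show ?thesis
    by (simp add: karamardian_invertible_iff assms(2,3))
qed

lemma lcp_trivial_2x2_iff:
  "lcp_trivial (vector [vector [0, \<beta>], vector [\<gamma>, \<delta>]] :: real^2^2) q \<longleftrightarrow>
     (\<forall>a b. 0 \<le> a \<and> 0 \<le> b \<longrightarrow> 0 \<le> \<beta> * b + q $ 1 \<and> 0 \<le> \<gamma> * a + \<delta> * b + q $ 2 \<and>
        a * (\<beta> * b + q $ 1) + b * (\<gamma> * a + \<delta> * b + q $ 2) = 0 \<longrightarrow> a = 0 \<and> b = 0)"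
  unfolding lcp_trivial_def Ball_def forall_vector_2
  by (simp add: nonneg_orthant_def forall_2 matrix_vector_mult_def inner_vec_def sum_2 vec_eq_iff)

lemma lcp_trivial_2x2_gamma_neg:
  assumes "\<gamma> \<noteq> 0" and "lcp_trivial (vector [vector [0, \<beta>], vector [\<gamma>, \<delta>]] :: real^2^2) 0"
  shows "\<gamma> < 0"
proof (rule ccontr)
  assume "\<not> \<gamma> < 0"
  then have "0 \<le> \<gamma>" by simp
  then show False
    using assms(2)[unfolded lcp_trivial_2x2_iff, rule_format, of 1 0] by simp
qed

lemma lcp_trivial_2x2_delta_neg:
  assumes "\<delta> < 0" and "0 < q $ 2"
    and "lcp_trivial (vector [vector [0, \<beta>], vector [\<gamma>, \<delta>]] :: real^2^2) q"
  shows "\<beta> * (- q $ 2 / \<delta>) + q $ 1 < 0"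
proof (rule ccontr)
  define b where "b = - q $ 2 / \<delta>"
  assume "\<not> \<beta> * b + q $ 1 < 0"
  moreover have "0 < b" using assms(1,2) by (simp add: b_def divide_pos_neg)
  moreover have "\<delta> * b + q $ 2 = 0" using assms(1) by (simp add: b_def)
  ultimately show False
    using assms(3)[unfolded lcp_trivial_2x2_iff, rule_format, of 0 b] by simp
qed

lemma lcp_trivial_2x2_delta_pos:
  assumes "0 < \<beta>" and "\<delta> \<noteq> 0" and "0 < q $ 1" and "0 < q $ 2"
    and "lcp_trivial (vector [vector [0, \<beta>], vector [\<gamma>, \<delta>]] :: real^2^2) q"
  shows "0 < \<delta>"
proof (rule ccontr)
  assume "\<not> 0 < \<delta>"
  then have "\<delta> < 0" using assms(2) by simp
  then have "\<beta> * (- q $ 2 / \<delta>) + q $ 1 < 0"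
    using assms(4,5) by (rule lcp_trivial_2x2_delta_neg)
  moreover have "0 \<le> \<beta> * (- q $ 2 / \<delta>)"
    using assms(1,4) \<open>\<delta> < 0\<close> by (simp add: divide_pos_neg less_imp_le)
  ultimately show False using assms(3) by simp
qed

lemma lcp_trivial_2x2_beta_pos:
  assumes "\<gamma> < 0" and "\<beta> \<noteq> 0" and "0 < q $ 1" and "0 < q $ 2"
    and triv: "lcp_trivial (vector [vector [0, \<beta>], vector [\<gamma>, \<delta>]] :: real^2^2) q"
  shows "0 < \<beta>"
proof (rule ccontr)
  assume "\<not> 0 < \<beta>"
  then have "\<beta> < 0" using assms(2) by simp
  define b where "b = - q $ 1 / \<beta>"
  have "0 < b" using \<open>\<beta> < 0\<close> assms(3) by (simp add: b_def divide_pos_neg)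
  have \<beta>b: "\<beta> * b + q $ 1 = 0" using \<open>\<beta> < 0\<close> by (simp add: b_def)
  show False
  proof (cases "0 \<le> \<delta> * b + q $ 2")
    case True
    define a where "a = - (\<delta> * b + q $ 2) / \<gamma>"
    have "0 \<le> a" using True assms(1) by (simp add: a_def divide_nonpos_neg)
    moreover have "\<gamma> * a + \<delta> * b + q $ 2 = 0" using assms(1) by (simp add: a_def)
    ultimately show False
      using triv[unfolded lcp_trivial_2x2_iff, rule_format, of a b] \<open>0 < b\<close> \<beta>b by simp
  next
    case False
    then have "\<delta> * b < 0" using assms(4) by linarith
    then have "\<delta> < 0" using \<open>0 < b\<close> by (simp add: mult_less_0_iff)
    define b' where "b' = - q $ 2 / \<delta>"
    have "\<delta> * b < \<delta> * b'" using False \<open>\<delta> < 0\<close> by (simp add: b'_def)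
    then have "b' < b" using \<open>\<delta> < 0\<close> by (simp add: mult_less_cancel_left)
    then have "\<beta> * b < \<beta> * b'" using \<open>\<beta> < 0\<close> by (simp add: mult_less_cancel_left)
    then have "0 < \<beta> * b' + q $ 1" using \<beta>b by simp
    moreover have "\<beta> * b' + q $ 1 < 0"
      unfolding b'_def using \<open>\<delta> < 0\<close> assms(4) triv by (rule lcp_trivial_2x2_delta_neg)
    ultimately show False by simp
  qed
qed

lemma lcp_trivial_2x2_zero:
  assumes "\<gamma> < 0" and "0 < \<beta>" and "0 < \<delta>"
  shows "lcp_trivial (vector [vector [0, \<beta>], vector [\<gamma>, \<delta>]] :: real^2^2) 0"
  unfolding lcp_trivial_2x2_iff
proof (intro allI impI)
  fix a b :: real
  assume "0 \<le> a \<and> 0 \<le> b"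
    and "0 \<le> \<beta> * b + 0 $ 1 \<and> 0 \<le> \<gamma> * a + \<delta> * b + 0 $ 2 \<and>
      a * (\<beta> * b + 0 $ 1) + b * (\<gamma> * a + \<delta> * b + 0 $ 2) = 0"
  then have "0 \<le> a" "0 \<le> b" "0 \<le> \<gamma> * a + \<delta> * b"
    and "a * (\<beta> * b) + b * (\<gamma> * a + \<delta> * b) = 0" by simp_all
  moreover have "0 \<le> a * (\<beta> * b)" using \<open>0 \<le> a\<close> \<open>0 \<le> b\<close> assms(2) by simp
  moreover have "0 \<le> b * (\<gamma> * a + \<delta> * b)" using \<open>0 \<le> b\<close> \<open>0 \<le> \<gamma> * a + \<delta> * b\<close> by simp
  ultimately have "a * (\<beta> * b) = 0" and b0: "b * (\<gamma> * a + \<delta> * b) = 0" by linarith+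
  have "b = 0"
  proof (rule ccontr)
    assume "b \<noteq> 0"
    then have "a = 0" using \<open>a * (\<beta> * b) = 0\<close> assms(2) by simp
    then show False using b0 \<open>b \<noteq> 0\<close> assms(3) by simp
  qed
  then have "0 \<le> \<gamma> * a" using \<open>0 \<le> \<gamma> * a + \<delta> * b\<close> by simp
  then show "a = 0 \<and> b = 0"
    using \<open>b = 0\<close> \<open>0 \<le> a\<close> assms(1) by (simp add: mult_le_0_iff zero_le_mult_iff)
qed

lemma lcp_trivial_2x2_pos:
  assumes "0 \<le> \<beta>" and "0 \<le> \<delta>" and "0 < q $ 1" and "0 < q $ 2"
  shows "lcp_trivial (vector [vector [0, \<beta>], vector [\<gamma>, \<delta>]] :: real^2^2) q"
  unfolding lcp_trivial_2x2_iff
proof (intro allI impI)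
  fix a b :: real
  assume ab: "0 \<le> a \<and> 0 \<le> b"
    and h: "0 \<le> \<beta> * b + q $ 1 \<and> 0 \<le> \<gamma> * a + \<delta> * b + q $ 2 \<and>
      a * (\<beta> * b + q $ 1) + b * (\<gamma> * a + \<delta> * b + q $ 2) = 0"
  have "0 \<le> a * (\<beta> * b + q $ 1)" and "0 \<le> b * (\<gamma> * a + \<delta> * b + q $ 2)"
    using ab h by simp_all
  then have "a * (\<beta> * b + q $ 1) = 0" and "b * (\<gamma> * a + \<delta> * b + q $ 2) = 0"
    using h by linarith+
  moreover have "0 < \<beta> * b + q $ 1" and "0 < \<gamma> * 0 + \<delta> * b + q $ 2"
    using ab assms by (simp_all add: add_nonneg_pos)
  ultimately show "a = 0 \<and> b = 0" by simp
qed

lemma karamardian_2x2_iff: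
  fixes \<beta> \<gamma> \<delta> :: real
  assumes "\<beta> \<noteq> 0" and "\<gamma> \<noteq> 0" and "\<delta> \<noteq> 0"
  shows "karamardian (vector [vector [0, \<beta>], vector [\<gamma>, \<delta>]] :: real^2^2) \<longleftrightarrow>
    \<gamma> < 0 \<and> \<beta> > 0 \<and> \<delta> > 0"
proof -
  let ?A = "vector [vector [0, \<beta>], vector [\<gamma>, \<delta>]] :: real^2^2"
  have "invertible ?A" using assms by (simp add: invertible_det_nz det_2)
  show ?thesis
    unfolding karamardian_invertible_iff[OF \<open>invertible ?A\<close>]
  proof safe
    fix d :: "real^2"
    assume "lcp_trivial ?A 0" and d: "\<forall>i. 0 < d $ i" "lcp_trivial ?A d"
    show \<gamma>: "\<gamma> < 0" using assms(2) \<open>lcp_trivial ?A 0\<close> by (rule lcp_trivial_2x2_gamma_neg)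
    show \<beta>: "0 < \<beta>" using lcp_trivial_2x2_beta_pos[OF \<gamma> assms(1) _ _ d(2)] d(1) by simp
    show "0 < \<delta>" using lcp_trivial_2x2_delta_pos[OF \<beta> assms(3) _ _ d(2)] d(1) by simp
  next
    assume "\<gamma> < 0" "0 < \<beta>" "0 < \<delta>"
    then show "lcp_trivial ?A 0" by (rule lcp_trivial_2x2_zero)
    show "\<exists>d. (\<forall>i. 0 < d $ i) \<and> lcp_trivial ?A d"
      using \<open>0 < \<beta>\<close> \<open>0 < \<delta>\<close>
      by (intro exI[of _ "\<chi> i. 1"]) (simp add: lcp_trivial_2x2_pos less_imp_le)
  qed
qed

theorem mainTheorem20:
  fixes \<beta> \<gamma> \<delta> :: real and A :: "real^2^2"
  assumes "\<beta> \<noteq> 0" and "\<gamma> \<noteq> 0" and "\<delta> \<noteq> 0"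
    and "A = vector [vector [0, \<beta>], vector [\<gamma>, \<delta>]] \<or>
         A = vector [vector [\<delta>, \<gamma>], vector [\<beta>, 0]]"
  shows "karamardian A \<longleftrightarrow> \<gamma> < 0 \<and> \<beta> > 0 \<and> \<delta> > 0"
  using assms(4)
proof
  assume "A = vector [vector [0, \<beta>], vector [\<gamma>, \<delta>]]"
  then show ?thesis using karamardian_2x2_iff[OF assms(1-3)] by simp
next
  let ?A = "vector [vector [0, \<beta>], vector [\<gamma>, \<delta>]] :: real^2^2"
  let ?swap = "Transposition.transpose 1 2 :: 2 \<Rightarrow> 2"
  assume A: "A = vector [vector [\<delta>, \<gamma>], vector [\<beta>, 0]]"
  then have "A = permute_mat ?swap ?A"
    by (simp add: permute_mat_def vec_eq_iff forall_2 Transposition.transpose_def)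
  moreover have "invertible ?A" and "invertible A"
    using assms(1-3) A by (simp_all add: invertible_det_nz det_2)
  ultimately have "karamardian A \<longleftrightarrow> karamardian ?A"
    using karamardian_permute[of ?swap ?A] by simp
  then show ?thesis using karamardian_2x2_iff[OF assms(1-3)] by simp
qed

end
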